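(* Let $\mathbb F\in\{\mathbb C,\mathbb R\}$, $n>1$, and $\gamma=(\gamma_1,\dots,\gamma_n)\in\mathbb F^n$ such that $\operatorname{diag}(\gamma_1,\dots,\gamma_n)$ is not proportional to the identity matrix. Let $\mathfrak t_\gamma(n)$ and ${\rm T}_\gamma(n)$ be as in the context. For $B=(b_{ij})\in{\rm T}_\gamma(n)$ with inverse $B^{-1}=(\widehat b_{ij})$, the coadjoint action ${\rm Ad}^*_B$ maps the point of $\mathfrak t_\gamma^*(n)$ with coordinates $(x_{ij})_{j<i}$, $x_0$ to the point with coordinates $(\mathcal I_{ij})_{j<i}$, $\mathcal I_0$, where \[ \mathcal I_{ij}=\sum_{i\leqslant i',\,j'\leqslant j}b_{ii'}\widehat b_{j'j}x_{i'j'}, \quad j<i, \qquad \mathcal I_0=x_0+\sum_{j<i}\,\sum_{j\leqslant l\leqslant i}\gamma_lb_{li}\widehat b_{jl}x_{ij} \] (equivalently, the strictly lower triangular part of $\mathcal I$ is $BXB^{-1}$). Consequently these expressions, as functions of $B\in{\rm T}_\gamma(n)$ and of the coordinates $x$, form a complete set of functionally independent lifted invariants of ${\rm Ad}^*_{{\rm T}_\gamma(n)}$.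
   Context: $\mathfrak t_\gamma(n)$ is the Lie algebra over $\mathbb F$ with basis $e_{ij}$ ($1\leqslant i<j\leqslant n$) and $f$, with brackets $[e_{ij},e_{i'j'}]=\delta_{i'j}e_{ij'}-\delta_{ij'}e_{i'j}$ and $[f,e_{ij}]=(\gamma_i-\gamma_j)e_{ij}$; it is realized by matrices via $e_{ij}\sim E^n_{ij}$ (matrix unit) and $f\sim\operatorname{diag}(\gamma_1,\dots,\gamma_n)$. It is the Lie algebra of the group ${\rm T}_\gamma(n)=\{B\text{ nonsingular upper triangular } n\times n \mid \exists\,\varepsilon\in\mathbb F:\ b_{ii}=e^{\gamma_i\varepsilon}\ \forall i\}$, acting by the adjoint action ${\rm Ad}_BY=BYB^{-1}$. For $i<j$, $x_{ji}$ denotes the coordinate function on the dual space $\mathfrak t_\gamma^*(n)$ dual to $e_{ij}$ (i.e. with respect to the dual basis $e^*_{ji}$, $\langle e^*_{j'i'},e_{ij}\rangle=\delta_{ii'}\delta_{jj'}$), and $x_0$ the coordinate dual to $f$; $X$ is the strictly lower triangular $n\times n$ matrix with entries $x_{ij}$ for $i>j$ and zeros elsewhere. The coadjoint action is $({\rm Ad}^*_B\xi)(y)=\xi({\rm Ad}_{B^{-1}}y)$. A lifted invariant (in the sense of the moving-frame method of Fels and Olver) is a component of the map $(B,\xi)\mapsto{\rm Ad}^*_B\xi$ written in coordinates. *)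

theory Defs
  imports "HOL-Analysis.Analysis"
begin

text \<open>n x n matrices are functions nat => nat => 'a, only entries with indices in {1..n} matter.\<close>

definition mmult :: "nat \<Rightarrow> (nat \<Rightarrow> nat \<Rightarrow> 'a::comm_ring_1) \<Rightarrow> (nat \<Rightarrow> nat \<Rightarrow> 'a) \<Rightarrow> nat \<Rightarrow> nat \<Rightarrow> 'a" where
  "mmult n A C = (\<lambda>i j. \<Sum>k=1..n. A i k * C k j)"

definition is_inverse :: "nat \<Rightarrow> (nat \<Rightarrow> nat \<Rightarrow> 'a::comm_ring_1) \<Rightarrow> (nat \<Rightarrow> nat \<Rightarrow> 'a) \<Rightarrow> bool" where
  "is_inverse n B Bi \<longleftrightarrow> (\<forall>i\<in>{1..n}. \<forall>j\<in>{1..n}.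
      mmult n B Bi i j = (if i = j then 1 else 0) \<and> mmult n Bi B i j = (if i = j then 1 else 0))"

definition T_gamma :: "nat \<Rightarrow> (nat \<Rightarrow> 'a::{real_normed_field,banach}) \<Rightarrow> (nat \<Rightarrow> nat \<Rightarrow> 'a) set" where
  "T_gamma n \<gamma> = {B. (\<forall>i\<in>{1..n}. \<forall>j\<in>{1..n}. j < i \<longrightarrow> B i j = 0)
                     \<and> (\<exists>Bi. is_inverse n B Bi)
                     \<and> (\<exists>\<epsilon>. \<forall>i\<in>{1..n}. B i i = exp (\<gamma> i * \<epsilon>))}"

text \<open>An element of t_gamma(n) is given by coordinates (y, y0): y i j (1 <= i < j <= n) is the
  coefficient of e_ij, y0 the coefficient of f. Its matrix realization:\<close>
definition realize :: "nat \<Rightarrow> (nat \<Rightarrow> 'a::comm_ring_1) \<Rightarrow> (nat \<Rightarrow> nat \<Rightarrow> 'a) \<times> 'a \<Rightarrow> nat \<Rightarrow> nat \<Rightarrow> 'a" where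
  "realize n \<gamma> y = (\<lambda>i j. if i \<in> {1..n} \<and> j \<in> {1..n} then
       (if i < j then fst y i j else if i = j then snd y * \<gamma> i else 0) else 0)"

definition lie_coords :: "nat \<Rightarrow> (nat \<Rightarrow> 'a::comm_ring_1) \<Rightarrow> (nat \<Rightarrow> nat \<Rightarrow> 'a) \<Rightarrow> (nat \<Rightarrow> nat \<Rightarrow> 'a) \<times> 'a" where
  "lie_coords n \<gamma> Y = ((\<lambda>i j. if 1 \<le> i \<and> i < j \<and> j \<le> n then Y i j else 0),
                        (THE c. \<forall>i\<in>{1..n}. Y i i = c * \<gamma> i))"

text \<open>Adjoint action Ad_P y = P Y P^{-1}, where Q is the inverse of P.\<close>
definition Ad :: "nat \<Rightarrow> (nat \<Rightarrow> 'a::comm_ring_1) \<Rightarrow> (nat \<Rightarrow> nat \<Rightarrow> 'a) \<Rightarrow> (nat \<Rightarrow> nat \<Rightarrow> 'a)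
                  \<Rightarrow> (nat \<Rightarrow> nat \<Rightarrow> 'a) \<times> 'a \<Rightarrow> (nat \<Rightarrow> nat \<Rightarrow> 'a) \<times> 'a" where
  "Ad n \<gamma> P Q y = lie_coords n \<gamma> (mmult n (mmult n P (realize n \<gamma> y)) Q)"

text \<open>A point xi of the dual space with coordinates (x, x0): x i j (1 <= j < i <= n) is
  the value on e_ji, x0 the value on f.\<close>
definition dual_pair :: "nat \<Rightarrow> (nat \<Rightarrow> nat \<Rightarrow> 'a::comm_ring_1) \<times> 'a \<Rightarrow> (nat \<Rightarrow> nat \<Rightarrow> 'a) \<times> 'a \<Rightarrow> 'a" where
  "dual_pair n \<xi> y = (\<Sum>i=1..n. \<Sum>j=1..n. if j < i then fst \<xi> i j * fst y j i else 0) + snd \<xi> * snd y"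

definition coAd :: "nat \<Rightarrow> (nat \<Rightarrow> 'a::comm_ring_1) \<Rightarrow> (nat \<Rightarrow> nat \<Rightarrow> 'a) \<Rightarrow> (nat \<Rightarrow> nat \<Rightarrow> 'a)
                  \<Rightarrow> (nat \<Rightarrow> nat \<Rightarrow> 'a) \<times> 'a \<Rightarrow> (nat \<Rightarrow> nat \<Rightarrow> 'a) \<times> 'a \<Rightarrow> 'a" where
  "coAd n \<gamma> B Bi \<xi> = (\<lambda>y. dual_pair n \<xi> (Ad n \<gamma> Bi B y))"

definition basis_e :: "nat \<Rightarrow> nat \<Rightarrow> (nat \<Rightarrow> nat \<Rightarrow> 'a::comm_ring_1) \<times> 'a" where
  "basis_e i j = ((\<lambda>a b. if a = i \<and> b = j then 1 else 0), 0)"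

definition basis_f :: "(nat \<Rightarrow> nat \<Rightarrow> 'a::comm_ring_1) \<times> 'a" where
  "basis_f = ((\<lambda>a b. 0), 1)"

definition lowerX :: "nat \<Rightarrow> (nat \<Rightarrow> nat \<Rightarrow> 'a::comm_ring_1) \<Rightarrow> nat \<Rightarrow> nat \<Rightarrow> 'a" where
  "lowerX n x = (\<lambda>i j. if 1 \<le> j \<and> j < i \<and> i \<le> n then x i j else 0)"

end

theory Submission imports Defs begin

text \<open>Pairing \<open>\<xi> = (X, x0)\<close> with \<open>Ad_{B^{-1}} e_ji = B^{-1} E_ji B\<close> picks out the entry \<open>(i, j)\<close>
  of \<open>B X B^{-1}\<close>. Since \<open>B\<close> and \<open>B^{-1}\<close> are upper triangular, \<open>B^{-1} Y B\<close> has the same diagonal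
  as \<open>Y\<close>; so the \<open>f\<close>-coordinate of \<open>Ad_{B^{-1}} y\<close> is that of \<open>y\<close>, which gives \<open>I_0\<close>. Conjugation
  by triangular matrices also preserves upper triangularity, so the strictly lower part of
  \<open>B X B^{-1}\<close> determines the strictly lower \<open>X\<close>, and then \<open>I_0\<close> determines \<open>x0\<close>.\<close>

definition upper_triangular :: "nat \<Rightarrow> (nat \<Rightarrow> nat \<Rightarrow> 'a::zero) \<Rightarrow> bool" where
  "upper_triangular n A \<longleftrightarrow> (\<forall>i\<in>{1..n}. \<forall>j\<in>{1..n}. j < i \<longrightarrow> A i j = 0)"

lemma upper_triangularD:
  "upper_triangular n A \<Longrightarrow> i \<in> {1..n} \<Longrightarrow> j \<in> {1..n} \<Longrightarrow> j < i \<Longrightarrow> A i j = 0"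
  by (simp add: upper_triangular_def)

lemma mmult_assoc: "mmult n (mmult n A C) D = mmult n A (mmult n C D)"
  unfolding mmult_def fun_eq_iff
  by (auto simp: sum_distrib_left sum_distrib_right mult.assoc intro: sum.swap)

lemma mmult_diff_left:
  "mmult n (\<lambda>i j. A i j - A' i j) C = (\<lambda>i j. mmult n A C i j - mmult n A' C i j)"
  by (simp add: mmult_def fun_eq_iff left_diff_distrib sum_subtractf)

lemma mmult_diff_right:
  "mmult n A (\<lambda>i j. C i j - C' i j) = (\<lambda>i j. mmult n A C i j - mmult n A C' i j)"
  by (simp add: mmult_def fun_eq_iff right_diff_distrib sum_subtractf)

lemma mmult_one_left:
  assumes "\<forall>i\<in>{1..n}. \<forall>k\<in>{1..n}. E i k = (if i = k then 1 else 0)" and "i \<in> {1..n}"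
  shows "mmult n E A i j = A i j"
  unfolding mmult_def using assms
  by (subst sum.cong[OF refl, where h = "\<lambda>k. if k = i then A i j else 0"]) auto

lemma mmult_one_right:
  assumes "\<forall>k\<in>{1..n}. \<forall>j\<in>{1..n}. E k j = (if k = j then 1 else 0)" and "j \<in> {1..n}"
  shows "mmult n A E i j = A i j"
  unfolding mmult_def using assms
  by (subst sum.cong[OF refl, where h = "\<lambda>k. if k = j then A i j else 0"]) auto

lemma upper_triangular_mmult:
  assumes A: "upper_triangular n A" and C: "upper_triangular n C"
  shows "upper_triangular n (mmult n A C)"
  unfolding upper_triangular_def mmult_def
proof (intro ballI impI sum.neutral)
  fix i j k assume "i \<in> {1..n}" "j \<in> {1..n}" "j < i" "k \<in> {1..n}"
  then show "A i k * C k j = 0"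
    using upper_triangularD[OF A, of i k] upper_triangularD[OF C, of k j]
    by (cases "k < i") auto
qed

lemma mmult_upper_triangular_diag:
  assumes A: "upper_triangular n A" and C: "upper_triangular n C" and i: "i \<in> {1..n}"
  shows "mmult n A C i i = A i i * C i i"
proof -
  have "mmult n A C i i = (\<Sum>k=1..n. if k = i then A i i * C i i else 0)"
    unfolding mmult_def
  proof (rule sum.cong[OF refl])
    fix k assume "k \<in> {1..n}"
    then show "A i k * C k i = (if k = i then A i i * C i i else 0)"
      using upper_triangularD[OF A, of i k] upper_triangularD[OF C, of k i] i
      by (cases "k < i"; cases "k = i") auto
  qed
  then show ?thesis using i by simp
qed

text \<open>Column by column from the left: the entries of \<open>Bi\<close> below the diagonal in column \<open>j\<close>
  vanish because those in the earlier columns do and \<open>B j j \<noteq> 0\<close>.\<close>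
lemma upper_triangular_inverse:
  fixes B Bi :: "nat \<Rightarrow> nat \<Rightarrow> 'a::idom"
  assumes B: "upper_triangular n B" and diag: "\<forall>i\<in>{1..n}. B i i \<noteq> 0"
    and inv: "is_inverse n B Bi"
  shows "upper_triangular n Bi"
  unfolding upper_triangular_def
proof (intro ballI impI)
  fix i j assume "i \<in> {1..n}" "j \<in> {1..n}" "j < i"
  then show "Bi i j = 0"
  proof (induction j arbitrary: i rule: less_induct)
    case (less j)
    have "(\<Sum>k=1..n. Bi i k * B k j) = (\<Sum>k=1..n. if k = j then Bi i j * B j j else 0)"
    proof (rule sum.cong[OF refl])
      fix k assume "k \<in> {1..n}"
      then show "Bi i k * B k j = (if k = j then Bi i j * B j j else 0)"
        using less.IH[of k i] less.prems upper_triangularD[OF B, of k j]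
        by (cases "k < j"; cases "k = j") auto
    qed
    moreover have "(\<Sum>k=1..n. Bi i k * B k j) = 0"
      using inv less.prems unfolding is_inverse_def mmult_def by auto
    ultimately have "Bi i j * B j j = 0" using less.prems by simp
    then show ?case using diag less.prems by simp
  qed
qed

lemma upper_triangular_realize: "upper_triangular n (realize n \<gamma> y)"
  by (simp add: upper_triangular_def realize_def)

lemma realize_diag: "i \<in> {1..n} \<Longrightarrow> realize n \<gamma> y i i = snd y * \<gamma> i"
  by (simp add: realize_def)

text \<open>The scalar coordinate is defined by \<open>THE\<close>, which is determined only when \<open>\<gamma> \<noteq> 0\<close>.\<close>
lemma snd_lie_coords:
  fixes \<gamma> :: "nat \<Rightarrow> 'a::field"
  assumes "\<forall>i\<in>{1..n}. Y i i = c * \<gamma> i" and "z \<in> {1..n}" and "\<gamma> z \<noteq> 0"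
  shows "snd (lie_coords n \<gamma> Y) = c"
  unfolding lie_coords_def snd_conv
  by (rule the_equality) (use assms in auto)

lemma conj_realize_basis_e:
  assumes "1 \<le> j" "j < i" "i \<le> n"
  shows "mmult n (mmult n P (realize n \<gamma> (basis_e j i))) Q a b = P a j * Q i b"
proof -
  have realize: "realize n \<gamma> (basis_e j i) = (\<lambda>a b. if a = j \<and> b = i then 1 else 0)"
    using assms by (auto simp: realize_def basis_e_def fun_eq_iff)
  have "mmult n P (realize n \<gamma> (basis_e j i)) = (\<lambda>a c. if c = i then P a j else 0)"
    using assms unfolding realize by (auto simp: mmult_def fun_eq_iff if_distrib cong: if_cong)
  then show ?thesis
    using assms by (simp add: mmult_def fun_eq_iff if_distrib[where f = "\<lambda>u. u * _"] cong: if_cong)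
qed

lemma conj_realize_basis_f:
  "mmult n (mmult n P (realize n \<gamma> basis_f)) Q a b = (\<Sum>l=1..n. P a l * \<gamma> l * Q l b)"
proof -
  have realize: "realize n \<gamma> basis_f = (\<lambda>a b. if a \<in> {1..n} \<and> b \<in> {1..n} \<and> a = b then \<gamma> a else 0)"
    by (auto simp: realize_def basis_f_def fun_eq_iff)
  have "mmult n P (realize n \<gamma> basis_f) = (\<lambda>a c. if c \<in> {1..n} then P a c * \<gamma> c else 0)"
    unfolding realize by (auto simp: mmult_def fun_eq_iff if_distrib cong: if_cong)
  then show ?thesis by (simp add: mmult_def fun_eq_iff)
qed

lemma mmult_lowerX:
  "mmult n (mmult n B (lowerX n x)) Bi i j =
     (\<Sum>a=1..n. \<Sum>b=1..n. if b < a then x a b * (Bi b j * B i a) else 0)"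
proof -
  have "mmult n (mmult n B (lowerX n x)) Bi i j = (\<Sum>b=1..n. \<Sum>a=1..n. B i a * lowerX n x a b * Bi b j)"
    by (simp add: mmult_def sum_distrib_right)
  also have "\<dots> = (\<Sum>a=1..n. \<Sum>b=1..n. B i a * lowerX n x a b * Bi b j)"
    by (rule sum.swap)
  also have "\<dots> = (\<Sum>a=1..n. \<Sum>b=1..n. if b < a then x a b * (Bi b j * B i a) else 0)"
    by (intro sum.cong refl) (auto simp: lowerX_def)
  finally show ?thesis .
qed

lemma coAd_eq:
  "coAd n \<gamma> B Bi (x, x0) y =
     (\<Sum>a=1..n. \<Sum>b=1..n. if b < a then x a b * mmult n (mmult n Bi (realize n \<gamma> y)) B b a else 0)
     + x0 * snd (Ad n \<gamma> Bi B y)"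
  unfolding coAd_def Ad_def dual_pair_def lie_coords_def by (auto intro!: sum.cong)

locale triangular_coAd =
  fixes n :: nat and \<gamma> :: "nat \<Rightarrow> 'a::field" and B Bi :: "nat \<Rightarrow> nat \<Rightarrow> 'a"
  assumes upper_B: "upper_triangular n B"
    and upper_Bi: "upper_triangular n Bi"
    and inverse: "is_inverse n B Bi"
    and gamma_nonzero: "\<exists>z\<in>{1..n}. \<gamma> z \<noteq> 0"
begin

lemma inverse_left: "\<forall>i\<in>{1..n}. \<forall>k\<in>{1..n}. mmult n Bi B i k = (if i = k then 1 else 0)"
  using inverse by (simp add: is_inverse_def)

lemma snd_Ad: "snd (Ad n \<gamma> Bi B y) = snd y"
proof -
  obtain z where z: "z \<in> {1..n}" "\<gamma> z \<noteq> 0" using gamma_nonzero by blast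
  have "mmult n (mmult n Bi (realize n \<gamma> y)) B i i = snd y * \<gamma> i" if i: "i \<in> {1..n}" for i
  proof -
    have "mmult n (mmult n Bi (realize n \<gamma> y)) B i i = Bi i i * (snd y * \<gamma> i) * B i i"
      using i by (simp add: mmult_upper_triangular_diag upper_triangular_mmult
          upper_B upper_Bi upper_triangular_realize realize_diag)
    moreover have "Bi i i * B i i = 1"
      using inverse_left i mmult_upper_triangular_diag[OF upper_Bi upper_B i] by simp
    ultimately show ?thesis by (simp add: algebra_simps)
  qed
  then show ?thesis
    unfolding Ad_def using z by (intro snd_lie_coords) auto
qed

lemma coAd_basis_e:
  assumes "1 \<le> j" "j < i" "i \<le> n"
  shows "coAd n \<gamma> B Bi (x, x0) (basis_e j i) = mmult n (mmult n B (lowerX n x)) Bi i j"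
proof -
  have "snd (basis_e j i :: (nat \<Rightarrow> nat \<Rightarrow> 'a) \<times> 'a) = 0" by (simp add: basis_e_def)
  then show ?thesis
    unfolding coAd_eq snd_Ad conj_realize_basis_e[OF assms] mmult_lowerX by simp
qed

lemma conj_lowerX_eq_sum:
  assumes "1 \<le> j" "j < i" "i \<le> n"
  shows "mmult n (mmult n B (lowerX n x)) Bi i j = (\<Sum>i'=i..n. \<Sum>j'=1..j. B i i' * Bi j' j * x i' j')"
  unfolding mmult_lowerX
proof (rule sym, rule sum.mono_neutral_cong_left)
  show "\<forall>a\<in>{1..n} - {i..n}. (\<Sum>b=1..n. if b < a then x a b * (Bi b j * B i a) else 0) = 0"
    using upper_triangularD[OF upper_B, of i] assms by (auto intro: sum.neutral)
  fix a assume a: "a \<in> {i..n}"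
  show "(\<Sum>j'=1..j. B i a * Bi j' j * x a j') = (\<Sum>b=1..n. if b < a then x a b * (Bi b j * B i a) else 0)"
  proof (rule sum.mono_neutral_cong_left)
    show "\<forall>b\<in>{1..n} - {1..j}. (if b < a then x a b * (Bi b j * B i a) else 0) = 0"
      using upper_triangularD[OF upper_Bi, of _ j] assms by auto
  qed (use a assms in auto)
qed (use assms in auto)

lemma coAd_basis_f:
  "coAd n \<gamma> B Bi (x, x0) basis_f =
     x0 + (\<Sum>i=1..n. \<Sum>j=1..n. if j < i then (\<Sum>l=j..i. \<gamma> l * B l i * Bi j l * x i j) else 0)"
proof -
  have "(\<Sum>l=j..i. \<gamma> l * B l i * Bi j l * x i j) = x i j * (\<Sum>l=1..n. Bi j l * \<gamma> l * B l i)"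
    if "i \<in> {1..n}" "j \<in> {1..n}" for i j
  proof -
    have "(\<Sum>l=j..i. \<gamma> l * B l i * Bi j l * x i j) = (\<Sum>l=1..n. \<gamma> l * B l i * Bi j l * x i j)"
    proof (rule sum.mono_neutral_left)
      show "\<forall>l\<in>{1..n} - {j..i}. \<gamma> l * B l i * Bi j l * x i j = 0"
        using that upper_triangularD[OF upper_Bi, of j] upper_triangularD[OF upper_B, of _ i]
        by (metis Diff_iff atLeastAtMost_iff mult_eq_0_iff not_le)
    qed (use that in auto)
    then show ?thesis by (simp add: sum_distrib_left mult_ac)
  qed
  moreover have "snd (basis_f :: (nat \<Rightarrow> nat \<Rightarrow> 'a) \<times> 'a) = 1" by (simp add: basis_f_def)
  ultimately show ?thesis
    by (auto simp: coAd_eq snd_Ad conj_realize_basis_f add.commute intro!: sum.cong)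
qed

text \<open>The strictly lower part of \<open>B X Bi\<close> determines \<open>X\<close>: if it vanishes for a strictly lower
  \<open>D\<close>, then \<open>B D Bi\<close> is upper triangular, hence so is \<open>Bi (B D Bi) B = D\<close>.\<close>
lemma lowerX_eq_if_conj_lower_eq:
  assumes eq: "\<And>i j. 1 \<le> j \<Longrightarrow> j < i \<Longrightarrow> i \<le> n \<Longrightarrow>
      mmult n (mmult n B (lowerX n x)) Bi i j = mmult n (mmult n B (lowerX n x')) Bi i j"
    and ij: "1 \<le> j" "j < i" "i \<le> n"
  shows "x i j = x' i j"
proof -
  define D where "D = lowerX n (\<lambda>a b. x a b - x' a b)"
  have D_diff: "D = (\<lambda>a b. lowerX n x a b - lowerX n x' a b)"
    by (auto simp: D_def lowerX_def fun_eq_iff)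
  have "upper_triangular n (mmult n (mmult n B D) Bi)"
    using eq by (auto simp: upper_triangular_def D_diff mmult_diff_left mmult_diff_right)
  then have upper: "upper_triangular n (mmult n (mmult n Bi (mmult n (mmult n B D) Bi)) B)"
    by (rule upper_triangular_mmult[OF upper_triangular_mmult[OF upper_Bi] upper_B])
  have "mmult n (mmult n Bi (mmult n (mmult n B D) Bi)) B i j = D i j"
  proof -
    have "mmult n (mmult n Bi (mmult n (mmult n B D) Bi)) B = mmult n (mmult n (mmult n Bi B) D) (mmult n Bi B)"
      by (simp add: mmult_assoc)
    then show ?thesis
      using ij by (simp add: mmult_one_left[OF inverse_left] mmult_one_right[OF inverse_left])
  qed
  moreover have "i \<in> {1..n}" "j \<in> {1..n}" using ij by auto
  ultimately have "D i j = 0" using upper_triangularD[OF upper] \<open>j < i\<close> by simp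
  then show ?thesis using ij by (simp add: D_def lowerX_def)
qed

end

theorem lemma1:
  fixes n :: nat and \<gamma> :: "nat \<Rightarrow> 'a::{real_normed_field,banach}"
    and B Bi x :: "nat \<Rightarrow> nat \<Rightarrow> 'a" and x0 :: 'a
  assumes "n > 1"
    and "\<not> (\<exists>c. \<forall>i\<in>{1..n}. \<gamma> i = c)"
    and "B \<in> T_gamma n \<gamma>"
    and "is_inverse n B Bi"
  shows "(\<forall>i j. 1 \<le> j \<and> j < i \<and> i \<le> n \<longrightarrow>
            coAd n \<gamma> B Bi (x, x0) (basis_e j i) = (\<Sum>i'=i..n. \<Sum>j'=1..j. B i i' * Bi j' j * x i' j')
          \<and> coAd n \<gamma> B Bi (x, x0) (basis_e j i) = mmult n (mmult n B (lowerX n x)) Bi i j)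
       \<and> coAd n \<gamma> B Bi (x, x0) basis_f =
            x0 + (\<Sum>i=1..n. \<Sum>j=1..n. if j < i then (\<Sum>l=j..i. \<gamma> l * B l i * Bi j l * x i j) else 0)
       \<and> (\<forall>x' x0'. (\<forall>i j. 1 \<le> j \<and> j < i \<and> i \<le> n \<longrightarrow>
                        coAd n \<gamma> B Bi (x, x0) (basis_e j i) = coAd n \<gamma> B Bi (x', x0') (basis_e j i))
                   \<and> coAd n \<gamma> B Bi (x, x0) basis_f = coAd n \<gamma> B Bi (x', x0') basis_f
                   \<longrightarrow> (\<forall>i j. 1 \<le> j \<and> j < i \<and> i \<le> n \<longrightarrow> x i j = x' i j) \<and> x0 = x0')"
proof -
  have upper_B: "upper_triangular n B" and diag: "\<forall>i\<in>{1..n}. B i i \<noteq> 0"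
    using assms(3) by (auto simp: T_gamma_def upper_triangular_def)
  interpret triangular_coAd n \<gamma> B Bi
  proof
    show "upper_triangular n Bi" by (rule upper_triangular_inverse[OF upper_B diag assms(4)])
    show "\<exists>z\<in>{1..n}. \<gamma> z \<noteq> 0" using assms(2) by blast
  qed (fact upper_B assms(4))+
  have x_eq: "x i j = x' i j"
    if "\<forall>i j. 1 \<le> j \<and> j < i \<and> i \<le> n \<longrightarrow>
          coAd n \<gamma> B Bi (x, x0) (basis_e j i) = coAd n \<gamma> B Bi (x', x0') (basis_e j i)"
      and "1 \<le> j \<and> j < i \<and> i \<le> n" for x' x0' i j
    using that by (intro lowerX_eq_if_conj_lower_eq[of x x']) (auto simp: coAd_basis_e)
  show ?thesis
  proof (intro conjI allI impI)
    fix x' x0'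
    assume eq: "(\<forall>i j. 1 \<le> j \<and> j < i \<and> i \<le> n \<longrightarrow>
                   coAd n \<gamma> B Bi (x, x0) (basis_e j i) = coAd n \<gamma> B Bi (x', x0') (basis_e j i))
              \<and> coAd n \<gamma> B Bi (x, x0) basis_f = coAd n \<gamma> B Bi (x', x0') basis_f"
    then show "x i j = x' i j" if "1 \<le> j \<and> j < i \<and> i \<le> n" for i j
      using x_eq that by blast
    then have "(\<Sum>i=1..n. \<Sum>j=1..n. if j < i then (\<Sum>l=j..i. \<gamma> l * B l i * Bi j l * x i j) else 0)
        = (\<Sum>i=1..n. \<Sum>j=1..n. if j < i then (\<Sum>l=j..i. \<gamma> l * B l i * Bi j l * x' i j) else 0)"
      by (auto intro!: sum.cong)
    then show "x0 = x0'"
      using eq by (simp add: coAd_basis_f)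
  qed (simp_all add: coAd_basis_e conj_lowerX_eq_sum coAd_basis_f)
qed

end
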